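(* The kernel invariance algebra $\mathfrak g^\cap=\bigcap_V\mathfrak g_V$ of the class of equations $i\psi_t+\psi_{xx}+V(t,x)\psi=0$, the intersection running over all smooth complex-valued potentials $V$, is the two-dimensional algebra $\langle M,I\rangle$.
   Context: For a smooth complex-valued potential $V(t,x)$, $\mathfrak g_V$ is the maximal Lie invariance algebra of the linear Schrödinger equation $i\psi_t+\psi_{xx}+V(t,x)\psi=0$ ($\psi$ complex-valued, $t,x$ real), whose elements are vector fields on the space of $(t,x,\psi,\psi^* )$ with $\psi^*$ treated as an additional dependent variable. $M=i\psi\partial_\psi-i\psi^*\partial_{\psi^*}$, $I=\psi\partial_\psi+\psi^*\partial_{\psi^*}$. *)

theory Defs
  imports "HOL-Analysis.Analysis"
begin

fun dd :: "'a::real_normed_vector list \<Rightarrow> ('a \<Rightarrow> 'b::real_normed_vector) \<Rightarrow> 'a \<Rightarrow> 'b" where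
  "dd [] f = f"
| "dd (v # vs) f = (\<lambda>x. frechet_derivative (dd vs f) (at x) v)"

definition smooth :: "('a::real_normed_vector \<Rightarrow> 'b::real_normed_vector) \<Rightarrow> bool" where
  "smooth f \<longleftrightarrow> (\<forall>vs. continuous_on UNIV (dd vs f) \<and> (dd vs f) differentiable_on UNIV)"

definition pt :: "(real \<Rightarrow> real \<Rightarrow> 'b::real_normed_vector) \<Rightarrow> real \<Rightarrow> real \<Rightarrow> 'b" where
  "pt f t x = vector_derivative (\<lambda>s. f s x) (at t)"

definition px :: "(real \<Rightarrow> real \<Rightarrow> 'b::real_normed_vector) \<Rightarrow> real \<Rightarrow> real \<Rightarrow> 'b" where
  "px f t x = vector_derivative (\<lambda>y. f t y) (at x)"

text \<open>A (real) vector field  tau d_t + xi d_x + eta d_psi + eta* d_psi*  on the space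
  with coordinates (t,x,psi,psi*), psi complex and psi* its complex conjugate.
  The coefficients are functions of (t,x,psi); tau, xi are real-valued, and the
  coefficient of d_psi* is the complex conjugate of eta.\<close>
record vfield =
  tau :: "real \<Rightarrow> real \<Rightarrow> complex \<Rightarrow> real"
  xi  :: "real \<Rightarrow> real \<Rightarrow> complex \<Rightarrow> real"
  eta :: "real \<Rightarrow> real \<Rightarrow> complex \<Rightarrow> complex"

definition smooth_vf :: "vfield \<Rightarrow> bool" where
  "smooth_vf Q \<longleftrightarrow> smooth (\<lambda>(t,x,z). tau Q t x z) \<and> smooth (\<lambda>(t,x,z). xi Q t x z)
                   \<and> smooth (\<lambda>(t,x,z). eta Q t x z)"

definition vf_add :: "vfield \<Rightarrow> vfield \<Rightarrow> vfield" where
  "vf_add P Q = \<lparr>tau = (\<lambda>t x z. tau P t x z + tau Q t x z),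
                 xi = (\<lambda>t x z. xi P t x z + xi Q t x z),
                 eta = (\<lambda>t x z. eta P t x z + eta Q t x z)\<rparr>"

definition vf_scale :: "real \<Rightarrow> vfield \<Rightarrow> vfield" where
  "vf_scale c Q = \<lparr>tau = (\<lambda>t x z. c * tau Q t x z),
                   xi = (\<lambda>t x z. c * xi Q t x z),
                   eta = (\<lambda>t x z. of_real c * eta Q t x z)\<rparr>"

text \<open>M = i psi d_psi - i psi* d_psi*,  I = psi d_psi + psi* d_psi*.\<close>
definition vf_M :: vfield where
  "vf_M = \<lparr>tau = (\<lambda>t x z. 0), xi = (\<lambda>t x z. 0), eta = (\<lambda>t x z. \<i> * z)\<rparr>"

definition vf_I :: vfield where
  "vf_I = \<lparr>tau = (\<lambda>t x z. 0), xi = (\<lambda>t x z. 0), eta = (\<lambda>t x z. z)\<rparr>"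

definition schr :: "(real \<Rightarrow> real \<Rightarrow> complex) \<Rightarrow> (real \<Rightarrow> real \<Rightarrow> complex) \<Rightarrow> real \<Rightarrow> real \<Rightarrow> complex" where
  "schr V \<psi> t x = \<i> * pt \<psi> t x + px (px \<psi>) t x + V t x * \<psi> t x"

definition charac :: "vfield \<Rightarrow> (real \<Rightarrow> real \<Rightarrow> complex) \<Rightarrow> real \<Rightarrow> real \<Rightarrow> complex" where
  "charac Q \<psi> t x = eta Q t x (\<psi> t x) - of_real (tau Q t x (\<psi> t x)) * pt \<psi> t x
                     - of_real (xi Q t x (\<psi> t x)) * px \<psi> t x"

definition eta_t :: "vfield \<Rightarrow> (real \<Rightarrow> real \<Rightarrow> complex) \<Rightarrow> real \<Rightarrow> real \<Rightarrow> complex" where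
  "eta_t Q \<psi> t x = pt (charac Q \<psi>) t x + of_real (tau Q t x (\<psi> t x)) * pt (pt \<psi>) t x
                    + of_real (xi Q t x (\<psi> t x)) * pt (px \<psi>) t x"

definition eta_xx :: "vfield \<Rightarrow> (real \<Rightarrow> real \<Rightarrow> complex) \<Rightarrow> real \<Rightarrow> real \<Rightarrow> complex" where
  "eta_xx Q \<psi> t x = px (px (charac Q \<psi>)) t x + of_real (tau Q t x (\<psi> t x)) * pt (px (px \<psi>)) t x
                     + of_real (xi Q t x (\<psi> t x)) * px (px (px \<psi>)) t x"

definition pr_schr :: "(real \<Rightarrow> real \<Rightarrow> complex) \<Rightarrow> vfield \<Rightarrow> (real \<Rightarrow> real \<Rightarrow> complex) \<Rightarrow> real \<Rightarrow> real \<Rightarrow> complex" where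
  "pr_schr V Q \<psi> t x = \<i> * eta_t Q \<psi> t x + eta_xx Q \<psi> t x
      + (of_real (tau Q t x (\<psi> t x)) * pt V t x + of_real (xi Q t x (\<psi> t x)) * px V t x) * \<psi> t x
      + V t x * eta Q t x (\<psi> t x)"

text \<open>Q belongs to the maximal Lie invariance algebra g_V: Q is a smooth vector field and
  its second prolongation annihilates the equation on its solution manifold in the 2-jet
  space. Every 2-jet is realised by a smooth (polynomial) function psi at a point, so the
  solution manifold is parametrised by smooth psi and points (t,x) where the equation holds.\<close>
definition in_gV :: "(real \<Rightarrow> real \<Rightarrow> complex) \<Rightarrow> vfield \<Rightarrow> bool" where
  "in_gV V Q \<longleftrightarrow> smooth_vf Q \<and>
     (\<forall>\<psi>. smooth (\<lambda>(t,x). \<psi> t x) \<longrightarrow>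
        (\<forall>t x. schr V \<psi> t x = 0 \<longrightarrow> pr_schr V Q \<psi> t x = 0))"

definition kernel_alg :: "vfield set" where
  "kernel_alg = {Q. \<forall>V. smooth (\<lambda>(t,x). V t x) \<longrightarrow> in_gV V Q}"

end

theory Submission
  imports Defs
begin

text \<open>Every multiplication \<open>\<psi> \<mapsto> c\<psi>\<close> maps solutions to solutions whatever the potential, so
  \<open>M\<close> and \<open>I\<close> lie in the kernel. Conversely, the invariance condition for a kernel element
  is tested with polynomial solutions and polynomial potentials only: constant \<open>\<psi>\<close> with the
  potentials \<open>0\<close>, \<open>t - t\<^sub>0\<close> and \<open>x - x\<^sub>0\<close> kills \<open>\<tau>\<close> and \<open>\<xi>\<close>; \<open>\<psi>\<close> affine in \<open>t\<close> with a
  constant potential shows \<open>\<partial>\<^sub>\<psi>\<eta> = \<eta>/\<psi>\<close>, so \<open>\<eta> = c(t,x)\<psi>\<close>; finally \<open>\<psi> = 1\<close> and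
  \<open>\<psi> = x\<close> with zero potential give \<open>i c\<^sub>t + c\<^sub>x\<^sub>x = 0\<close> and \<open>c\<^sub>x = 0\<close>, so \<open>c\<close> is constant.
  Writing \<open>c = b + i a\<close> exhibits the field as \<open>aM + bI\<close>.\<close>

section \<open>Smooth maps\<close>

lemma dd_append: "dd us (dd vs f) = dd (us @ vs) f"
  by (induction us) auto

lemma smooth_dd: "smooth f \<Longrightarrow> smooth (dd vs f)"
  unfolding smooth_def by (simp add: dd_append)

lemma smooth_differentiable_at: "smooth f \<Longrightarrow> f differentiable (at x)"
  unfolding smooth_def differentiable_on_def by (metis UNIV_I dd.simps(1))

lemma smooth_continuous_on: "smooth f \<Longrightarrow> continuous_on UNIV f"
  unfolding smooth_def by (metis dd.simps(1))

lemma affine_has_derivative: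
  "bounded_linear L \<Longrightarrow> ((\<lambda>x. a + L x) has_derivative L) F"
  using has_derivative_add[OF has_derivative_const bounded_linear.has_derivative[OF _ has_derivative_ident]]
  by simp

lemma dd_affine:
  assumes "bounded_linear L"
  shows "\<exists>a' L'. bounded_linear L' \<and> dd vs (\<lambda>x. a + L x) = (\<lambda>x. a' + L' x)"
proof (induction vs)
  case Nil
  then show ?case using assms by auto
next
  case (Cons v vs)
  then obtain a' L' where L': "bounded_linear L'" and dd_vs: "dd vs (\<lambda>x. a + L x) = (\<lambda>x. a' + L' x)"
    by blast
  have "frechet_derivative (\<lambda>x. a' + L' x) (at x) = L'" for x
    using frechet_derivative_at[OF affine_has_derivative[OF L']] by simp
  then have "dd (v # vs) (\<lambda>x. a + L x) = (\<lambda>x. L' v + 0)"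
    by (simp add: dd_vs)
  then show ?case using bounded_linear_zero by blast
qed

lemma smooth_affine:
  assumes "bounded_linear L"
  shows "smooth (\<lambda>x. a + L x)"
  unfolding smooth_def
proof
  fix vs
  obtain a' L' where L': "bounded_linear L'" and dd_vs: "dd vs (\<lambda>x. a + L x) = (\<lambda>x. a' + L' x)"
    using dd_affine[OF assms] by blast
  have "(\<lambda>x. a' + L' x) differentiable_on UNIV"
    using affine_has_derivative[OF L'] unfolding differentiable_on_def differentiable_def by blast
  then show "continuous_on UNIV (dd vs (\<lambda>x. a + L x)) \<and> dd vs (\<lambda>x. a + L x) differentiable_on UNIV"
    by (simp add: dd_vs differentiable_imp_continuous_on)
qed

lemma smooth_const: "smooth (\<lambda>x. a)"
  using smooth_affine[OF bounded_linear_zero, of a] by simp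

lemma smooth_const_pair: "smooth (\<lambda>(t, x). a)"
  by (simp add: split_def smooth_const)

lemma smooth_compose_affine_has_derivative:
  assumes "smooth f" and L: "bounded_linear L"
  shows "((\<lambda>x. f (a + L x)) has_derivative frechet_derivative f (at (a + L x)) \<circ> L) (at x)"
proof -
  have "(f has_derivative frechet_derivative f (at (a + L x))) (at (a + L x))"
    using smooth_differentiable_at[OF assms(1)] frechet_derivative_works by blast
  from diff_chain_at[OF affine_has_derivative[OF L] this] show ?thesis
    by (simp add: o_def)
qed

lemma dd_compose_affine:
  assumes f: "smooth f" and L: "bounded_linear L"
  shows "dd vs (\<lambda>x. f (a + L x)) = (\<lambda>x. dd (map L vs) f (a + L x))"
proof (induction vs)
  case Nil
  show ?case by simp
next
  case (Cons v vs)
  have "frechet_derivative (\<lambda>y. dd (map L vs) f (a + L y)) (at x)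
          = frechet_derivative (dd (map L vs) f) (at (a + L x)) \<circ> L" for x
    using frechet_derivative_at[OF smooth_compose_affine_has_derivative[OF smooth_dd[OF f] L]]
    by simp
  then show ?case by (simp add: Cons.IH)
qed

lemma smooth_compose_affine:
  assumes f: "smooth f" and L: "bounded_linear L"
  shows "smooth (\<lambda>x. f (a + L x))"
  unfolding smooth_def
proof
  fix vs
  have "(\<lambda>x. dd (map L vs) f (a + L x)) differentiable_on UNIV"
    using smooth_compose_affine_has_derivative[OF smooth_dd[OF f] L]
    unfolding differentiable_on_def differentiable_def by blast
  then show "continuous_on UNIV (dd vs (\<lambda>x. f (a + L x))) \<and> dd vs (\<lambda>x. f (a + L x)) differentiable_on UNIV"
    by (simp add: dd_compose_affine[OF f L] differentiable_imp_continuous_on)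
qed

lemma smooth_has_vector_derivative_line:
  assumes "smooth f"
  shows "((\<lambda>s. f (a + s *\<^sub>R d)) has_vector_derivative dd [d] f (a + s *\<^sub>R d)) (at s)"
proof -
  have "bounded_linear (\<lambda>s::real. s *\<^sub>R d)"
    by (rule bounded_linear_scaleR_left)
  from smooth_compose_affine_has_derivative[OF assms this, of a s]
  have "((\<lambda>s. f (a + s *\<^sub>R d)) has_derivative (\<lambda>h. h *\<^sub>R frechet_derivative f (at (a + s *\<^sub>R d)) d)) (at s)"
    using linear_scale[OF has_derivative_linear[OF frechet_derivative_works[THEN iffD1,
          OF smooth_differentiable_at[OF assms]]]]
    by (simp add: o_def)
  then show ?thesis by (simp add: has_vector_derivative_def)
qed

lemma smooth_fix_third:
  fixes F :: "'a::real_normed_vector \<Rightarrow> 'b::real_normed_vector \<Rightarrow> 'c::real_normed_vector \<Rightarrow> 'd::real_normed_vector"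
  assumes "smooth (\<lambda>(t, x, z). F t x z)"
  shows "smooth (\<lambda>(t, x). F t x z)"
proof -
  have "bounded_linear (\<lambda>p::'a \<times> 'b. (fst p, snd p, 0::'c))"
    by (intro bounded_linear_Pair bounded_linear_fst bounded_linear_snd bounded_linear_zero)
  from smooth_compose_affine[OF assms this, of "(0, 0, z)"] show ?thesis
    by (simp add: split_def)
qed

lemma smooth_continuous_on_third:
  fixes F :: "'a::real_normed_vector \<Rightarrow> 'b::real_normed_vector \<Rightarrow> 'c::real_normed_vector \<Rightarrow> 'd::real_normed_vector"
  assumes "smooth (\<lambda>(t, x, z). F t x z)"
  shows "continuous_on UNIV (F t x)"
proof -
  have "continuous_on UNIV (\<lambda>z::'c. (t, x, z))"
    by (intro continuous_intros)
  from continuous_on_compose2[OF smooth_continuous_on[OF assms] this] show ?thesis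
    by simp
qed

lemma continuous_on_vanishing_off_point:
  fixes g :: "'a::perfect_space \<Rightarrow> 'b::real_normed_vector"
  assumes "continuous_on UNIV g" and "\<And>z. z \<noteq> a \<Longrightarrow> g z = 0"
  shows "g a = 0"
proof -
  have "(g \<longlongrightarrow> g a) (at a)"
    using assms(1) by (simp add: continuous_on_def)
  moreover have "(g \<longlongrightarrow> 0) (at a)"
    by (rule tendsto_eventually) (auto simp: eventually_at_filter assms(2))
  ultimately show ?thesis
    using tendsto_unique[OF at_neq_bot] by blast
qed

section \<open>Partial derivatives\<close>

lemma pt_eq_dd:
  assumes "smooth (\<lambda>(t, x). \<psi> t x)"
  shows "pt \<psi> t x = dd [(1, 0)] (\<lambda>(t, x). \<psi> t x) (t, x)"
  unfolding pt_def
  by (rule vector_derivative_at)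
    (use smooth_has_vector_derivative_line[OF assms, where a = "(0, x)" and s = t and d = "(1, 0)"] in simp)

lemma px_eq_dd:
  assumes "smooth (\<lambda>(t, x). \<psi> t x)"
  shows "px \<psi> t x = dd [(0, 1)] (\<lambda>(t, x). \<psi> t x) (t, x)"
  unfolding px_def
  by (rule vector_derivative_at)
    (use smooth_has_vector_derivative_line[OF assms, where a = "(t, 0)" and s = x and d = "(0, 1)"] in simp)

lemma has_vector_derivative_pt:
  assumes "smooth (\<lambda>(t, x). \<psi> t x)"
  shows "((\<lambda>s. \<psi> s x) has_vector_derivative pt \<psi> t x) (at t)"
  using smooth_has_vector_derivative_line[OF assms, where a = "(0, x)" and s = t and d = "(1, 0)"]
  by (simp add: pt_eq_dd[OF assms])

lemma has_vector_derivative_px: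
  assumes "smooth (\<lambda>(t, x). \<psi> t x)"
  shows "((\<lambda>y. \<psi> t y) has_vector_derivative px \<psi> t x) (at x)"
  using smooth_has_vector_derivative_line[OF assms, where a = "(t, 0)" and s = x and d = "(0, 1)"]
  by (simp add: px_eq_dd[OF assms])

lemma smooth_px:
  assumes "smooth (\<lambda>(t, x). \<psi> t x)"
  shows "smooth (\<lambda>(t, x). px \<psi> t x)"
proof -
  have "(\<lambda>(t, x). px \<psi> t x) = dd [(0, 1)] (\<lambda>(t, x). \<psi> t x)"
    by (auto simp: fun_eq_iff px_eq_dd[OF assms])
  then show ?thesis
    using smooth_dd[OF assms] by metis
qed

lemma pt_const_in_t [simp]: "pt (\<lambda>t x. f x) = (\<lambda>t x. 0)"
  by (simp add: pt_def fun_eq_iff)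

lemma px_const_in_x [simp]: "px (\<lambda>t x. f t) = (\<lambda>t x. 0)"
  by (simp add: px_def fun_eq_iff)

lemma pt_mult_left:
  fixes \<psi> :: "real \<Rightarrow> real \<Rightarrow> 'a::real_normed_algebra"
  assumes "smooth (\<lambda>(t, x). \<psi> t x)"
  shows "pt (\<lambda>t x. k x * \<psi> t x) t x = k x * pt \<psi> t x"
  unfolding pt_def[of "\<lambda>t x. k x * \<psi> t x"]
  by (intro vector_derivative_at has_vector_derivative_mult_right has_vector_derivative_pt assms)

lemma px_mult_left:
  fixes \<psi> :: "real \<Rightarrow> real \<Rightarrow> 'a::real_normed_algebra"
  assumes "smooth (\<lambda>(t, x). \<psi> t x)"
  shows "px (\<lambda>t x. k t * \<psi> t x) t x = k t * px \<psi> t x"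
  unfolding px_def[of "\<lambda>t x. k t * \<psi> t x"]
  by (intro vector_derivative_at has_vector_derivative_mult_right has_vector_derivative_px assms)

lemma has_vector_derivative_of_real_ident:
  "((\<lambda>y. complex_of_real y) has_vector_derivative 1) (at x)"
  using has_vector_derivative_of_real[OF DERIV_ident] by simp

lemma px_mult_space:
  assumes "smooth (\<lambda>(t, x). \<psi> t x)"
  shows "px (\<lambda>t x. complex_of_real x * \<psi> t x) t x = complex_of_real x * px \<psi> t x + \<psi> t x"
proof -
  have "((\<lambda>y. complex_of_real y * \<psi> t y) has_vector_derivative
          complex_of_real x * px \<psi> t x + \<psi> t x) (at x)"
    using has_vector_derivative_mult[OF has_vector_derivative_of_real_ident
          has_vector_derivative_px[OF assms]] by simp
  then show ?thesis
    unfolding px_def[of "\<lambda>t x. complex_of_real x * \<psi> t x"] by (rule vector_derivative_at)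
qed

lemma px_px_mult_space:
  assumes \<psi>: "smooth (\<lambda>(t, x). \<psi> t x)"
  shows "px (px (\<lambda>t x. complex_of_real x * \<psi> t x)) t x
           = complex_of_real x * px (px \<psi>) t x + 2 * px \<psi> t x"
proof -
  have "px (\<lambda>t x. complex_of_real x * \<psi> t x) = (\<lambda>t x. complex_of_real x * px \<psi> t x + \<psi> t x)"
    using px_mult_space[OF \<psi>] by (simp add: fun_eq_iff)
  moreover have "((\<lambda>y. complex_of_real y * px \<psi> t y + \<psi> t y) has_vector_derivative
                    complex_of_real x * px (px \<psi>) t x + 1 * px \<psi> t x + px \<psi> t x) (at x)"
    by (intro has_vector_derivative_add has_vector_derivative_mult has_vector_derivative_of_real_ident
        has_vector_derivative_px smooth_px \<psi>)
  ultimately have "px (px (\<lambda>t x. complex_of_real x * \<psi> t x)) t x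
                     = complex_of_real x * px (px \<psi>) t x + 1 * px \<psi> t x + px \<psi> t x"
    unfolding px_def[of "px (\<lambda>t x. complex_of_real x * \<psi> t x)"] by (simp only: vector_derivative_at)
  then show ?thesis
    by (subst mult_2) (simp add: add.assoc)
qed

lemma smooth_affine_time:
  "smooth (\<lambda>(t::real, x::real). a + b * complex_of_real (t - t\<^sub>0))"
proof -
  have "bounded_linear (\<lambda>p::real \<times> real. b * complex_of_real (fst p))"
    by (intro bounded_linear_compose[OF bounded_linear_mult_right]
        bounded_linear_compose[OF bounded_linear_of_real bounded_linear_fst])
  from smooth_affine[OF this, of "a - b * complex_of_real t\<^sub>0"] show ?thesis
    by (simp add: split_def algebra_simps)
qed

lemma smooth_affine_space:
  "smooth (\<lambda>(t::real, x::real). a + b * complex_of_real (x - x\<^sub>0))"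
proof -
  have "bounded_linear (\<lambda>p::real \<times> real. b * complex_of_real (snd p))"
    by (intro bounded_linear_compose[OF bounded_linear_mult_right]
        bounded_linear_compose[OF bounded_linear_of_real bounded_linear_snd])
  from smooth_affine[OF this, of "a - b * complex_of_real x\<^sub>0"] show ?thesis
    by (simp add: split_def algebra_simps)
qed

lemma pt_affine_time: "pt (\<lambda>t x. a + b * complex_of_real (t - t\<^sub>0)) t x = b"
proof -
  have "((\<lambda>s. a + b * complex_of_real (s - t\<^sub>0)) has_vector_derivative b) (at t)"
    by (auto intro!: derivative_eq_intros)
  then show ?thesis unfolding pt_def by (rule vector_derivative_at)
qed

lemma px_affine_space: "px (\<lambda>t x. a + b * complex_of_real (x - x\<^sub>0)) t x = b"
proof -
  have "((\<lambda>y. a + b * complex_of_real (y - x\<^sub>0)) has_vector_derivative b) (at x)"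
    by (auto intro!: derivative_eq_intros)
  then show ?thesis unfolding px_def by (rule vector_derivative_at)
qed

section \<open>Multiplications are symmetries of every equation\<close>

definition vf_mult :: "complex \<Rightarrow> vfield" where
  "vf_mult c = \<lparr>tau = (\<lambda>t x z. 0), xi = (\<lambda>t x z. 0), eta = (\<lambda>t x z. c * z)\<rparr>"

lemma vf_add_scale_M_I:
  "vf_add (vf_scale a vf_M) (vf_scale b vf_I) = vf_mult (complex_of_real b + \<i> * complex_of_real a)"
  by (simp add: vf_add_def vf_scale_def vf_M_def vf_I_def vf_mult_def fun_eq_iff algebra_simps)

lemma smooth_vf_mult: "smooth_vf (vf_mult c)"
proof -
  have "bounded_linear (\<lambda>p::real \<times> real \<times> complex. c * snd (snd p))"
    by (intro bounded_linear_compose[OF bounded_linear_mult_right]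
        bounded_linear_compose[OF bounded_linear_snd bounded_linear_snd])
  from smooth_affine[OF this, of 0] smooth_const show ?thesis
    by (simp add: smooth_vf_def vf_mult_def split_def)
qed

lemma pr_schr_vf_mult:
  assumes \<psi>: "smooth (\<lambda>(t, x). \<psi> t x)"
  shows "pr_schr V (vf_mult c) \<psi> t x = c * schr V \<psi> t x"
proof -
  have charac: "charac (vf_mult c) \<psi> = (\<lambda>t x. c * \<psi> t x)"
    by (simp add: charac_def vf_mult_def fun_eq_iff)
  have "px (\<lambda>t x. c * \<psi> t x) = (\<lambda>t x. c * px \<psi> t x)"
    using px_mult_left[OF \<psi>, of "\<lambda>_. c"] by (simp add: fun_eq_iff)
  then have "px (px (\<lambda>t x. c * \<psi> t x)) t x = c * px (px \<psi>) t x"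
    using px_mult_left[OF smooth_px[OF \<psi>], of "\<lambda>_. c"] by simp
  then show ?thesis
    using pt_mult_left[OF \<psi>, of "\<lambda>_. c"]
    unfolding pr_schr_def eta_t_def eta_xx_def charac schr_def
    by (simp add: vf_mult_def algebra_simps)
qed

lemma in_gV_vf_mult: "in_gV V (vf_mult c)"
  by (simp add: in_gV_def smooth_vf_mult pr_schr_vf_mult)

section \<open>The kernel algebra\<close>

lemma kernel_alg_smooth_vf: "Q \<in> kernel_alg \<Longrightarrow> smooth_vf Q"
  using smooth_const_pair unfolding kernel_alg_def in_gV_def by blast

lemma kernel_alg_annihilates:
  assumes "Q \<in> kernel_alg" "smooth (\<lambda>(t, x). V t x)" "smooth (\<lambda>(t, x). \<psi> t x)"
    and "schr V \<psi> t x = 0"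
  shows "pr_schr V Q \<psi> t x = 0"
  using assms unfolding kernel_alg_def in_gV_def by blast

lemma kernel_alg_vertical:
  assumes Q: "Q \<in> kernel_alg"
  shows "tau Q = (\<lambda>t x z. 0) \<and> xi Q = (\<lambda>t x z. 0)"
proof -
  have off_zero: "tau Q t\<^sub>0 x\<^sub>0 z = 0 \<and> xi Q t\<^sub>0 x\<^sub>0 z = 0" if "z \<noteq> 0" for t\<^sub>0 x\<^sub>0 z
  proof -
    let ?\<psi> = "\<lambda>(s::real) (y::real). z"
    have annihilates: "pr_schr V Q ?\<psi> t\<^sub>0 x\<^sub>0 = 0" if "smooth (\<lambda>(t, x). V t x)" "V t\<^sub>0 x\<^sub>0 = 0" for V
      using kernel_alg_annihilates[OF Q that(1) smooth_const_pair] that(2) by (simp add: schr_def)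
    have free: "\<i> * eta_t Q ?\<psi> t\<^sub>0 x\<^sub>0 + eta_xx Q ?\<psi> t\<^sub>0 x\<^sub>0 = 0"
      using annihilates[of "\<lambda>s y. 0", OF smooth_const_pair] by (simp add: pr_schr_def)
    \<comment> \<open>These potentials vanish at \<open>(t\<^sub>0, x\<^sub>0)\<close>: only \<open>(\<tau> V\<^sub>t + \<xi> V\<^sub>x) \<psi>\<close> distinguishes their conditions from \<open>free\<close>.\<close>
    have "complex_of_real (tau Q t\<^sub>0 x\<^sub>0 z) * z = 0"
      using annihilates[OF smooth_affine_time[of 0 1 t\<^sub>0]] free pt_affine_time[of 0 1 t\<^sub>0]
      by (simp add: pr_schr_def)
    moreover have "complex_of_real (xi Q t\<^sub>0 x\<^sub>0 z) * z = 0"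
      using annihilates[OF smooth_affine_space[of 0 1 x\<^sub>0]] free px_affine_space[of 0 1 x\<^sub>0]
      by (simp add: pr_schr_def)
    ultimately show ?thesis using \<open>z \<noteq> 0\<close> by simp
  qed
  have tau: "smooth (\<lambda>(t, x, z). tau Q t x z)" and xi: "smooth (\<lambda>(t, x, z). xi Q t x z)"
    using kernel_alg_smooth_vf[OF Q] by (auto simp: smooth_vf_def)
  have "tau Q t x 0 = 0" "xi Q t x 0 = 0" for t x
    by (rule continuous_on_vanishing_off_point[OF smooth_continuous_on_third[OF tau]]
             continuous_on_vanishing_off_point[OF smooth_continuous_on_third[OF xi]],
        use off_zero in blast)+
  then have "tau Q t x z = 0 \<and> xi Q t x z = 0" for t x z
    using off_zero by (cases "z = 0") auto
  then show ?thesis by (simp add: fun_eq_iff)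
qed

lemma pr_schr_vertical:
  assumes "tau Q = (\<lambda>t x z. 0)" "xi Q = (\<lambda>t x z. 0)"
  shows "pr_schr V Q \<psi> t x = \<i> * pt (\<lambda>t x. eta Q t x (\<psi> t x)) t x
           + px (px (\<lambda>t x. eta Q t x (\<psi> t x))) t x + V t x * eta Q t x (\<psi> t x)"
proof -
  have "charac Q \<psi> = (\<lambda>t x. eta Q t x (\<psi> t x))"
    by (simp add: charac_def fun_eq_iff assms)
  then show ?thesis by (simp add: pr_schr_def eta_t_def eta_xx_def assms)
qed

lemma kernel_alg_eta_time_derivative:
  assumes Q: "Q \<in> kernel_alg" and "z \<noteq> 0"
  shows "\<i> * frechet_derivative (\<lambda>(t, x, z). eta Q t x z) (at (t, x, z)) (1, 0, w)
           + px (px (\<lambda>s y. eta Q s y z)) t x = \<i> * w / z * eta Q t x z"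
proof -
  have vertical: "tau Q = (\<lambda>t x z. 0)" "xi Q = (\<lambda>t x z. 0)"
    using kernel_alg_vertical[OF Q] by auto
  let ?E = "\<lambda>(t::real, x::real, z::complex). eta Q t x z"
  have E: "smooth ?E"
    using kernel_alg_smooth_vf[OF Q] by (simp add: smooth_vf_def)
  let ?\<psi> = "\<lambda>s y. z + w * complex_of_real (s - t)"
  let ?V = "\<lambda>s y. - \<i> * w / z"
  have "schr ?V ?\<psi> t x = 0"
    unfolding schr_def pt_affine_time using \<open>z \<noteq> 0\<close> by simp
  then have "pr_schr ?V Q ?\<psi> t x = 0"
    by (rule kernel_alg_annihilates[OF Q smooth_const_pair smooth_affine_time])
  moreover have "pt (\<lambda>s y. eta Q s y (?\<psi> s y)) t x = frechet_derivative ?E (at (t, x, z)) (1, 0, w)"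
  proof -
    have "(\<lambda>s. ?E ((0, x, z - w * complex_of_real t) + s *\<^sub>R (1, 0, w))) = (\<lambda>s. eta Q s x (?\<psi> s x))"
      by (simp add: fun_eq_iff scaleR_conv_of_real algebra_simps)
    moreover have "(0, x, z - w * complex_of_real t) + t *\<^sub>R (1, 0, w) = (t, x, z)"
      by (simp add: scaleR_conv_of_real algebra_simps)
    ultimately have "((\<lambda>s. eta Q s x (?\<psi> s x)) has_vector_derivative
                       frechet_derivative ?E (at (t, x, z)) (1, 0, w)) (at t)"
      using smooth_has_vector_derivative_line[OF E, where a = "(0, x, z - w * complex_of_real t)"
          and s = t and d = "(1, 0, w)"]
      by simp
    then show ?thesis unfolding pt_def by (rule vector_derivative_at)
  qed
  moreover have "px (px (\<lambda>s y. eta Q s y (?\<psi> s y))) t x = px (px (\<lambda>s y. eta Q s y z)) t x"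
    by (simp add: px_def)
  ultimately show ?thesis
    by (simp add: pr_schr_vertical[OF vertical] algebra_simps)
qed

lemma kernel_alg_eta_has_field_derivative:
  assumes Q: "Q \<in> kernel_alg" and "z \<noteq> 0"
  shows "(eta Q t x has_field_derivative eta Q t x z / z) (at z)"
proof -
  define E where "E = (\<lambda>(t::real, x::real, z::complex). eta Q t x z)"
  have E: "smooth E"
    using kernel_alg_smooth_vf[OF Q] by (simp add: smooth_vf_def E_def)
  define D where "D = frechet_derivative E (at (t, x, z))"
  define P where "P = px (px (\<lambda>s y. eta Q s y z)) t x"
  have E_D: "(E has_derivative D) (at (t, x, z))"
    unfolding D_def using smooth_differentiable_at[OF E] frechet_derivative_works by blast
  have time_derivative: "\<i> * D (1, 0, w) + P = \<i> * w / z * eta Q t x z" for w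
    unfolding E_def D_def P_def by (rule kernel_alg_eta_time_derivative[OF Q \<open>z \<noteq> 0\<close>])
  have D_vertical: "D (0, 0, w) = eta Q t x z / z * w" for w
  proof -
    have "D (1, 0, w) = D (1, 0, 0) + D (0, 0, w)"
      using linear_add[OF has_derivative_linear[OF E_D], of "(1, 0, 0)" "(0, 0, w)"] by simp
    then have "\<i> * D (0, 0, w) = (\<i> * D (1, 0, w) + P) - (\<i> * D (1, 0, 0) + P)"
      by (simp add: algebra_simps)
    also have "\<dots> = \<i> * (eta Q t x z / z * w)"
      unfolding time_derivative by simp
    finally show ?thesis
      by (subst (asm) mult_cancel_left) simp
  qed
  have "((\<lambda>z'. (t, x, z')) has_derivative (\<lambda>h. (0, 0, h))) (at z)"
    by (auto intro!: derivative_eq_intros)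
  from diff_chain_at[OF this E_D]
  have "((\<lambda>z'. E (t, x, z')) has_derivative (\<lambda>h. D (0, 0, h))) (at z)"
    by (simp add: o_def)
  moreover have "(\<lambda>z'. E (t, x, z')) = eta Q t x"
    by (simp add: E_def fun_eq_iff)
  moreover have "(\<lambda>h. D (0, 0, h)) = (*) (eta Q t x z / z)"
    by (simp add: fun_eq_iff D_vertical)
  ultimately show ?thesis
    unfolding has_field_derivative_def by simp
qed

lemma kernel_alg_eta_homogeneous:
  assumes Q: "Q \<in> kernel_alg"
  shows "eta Q t x z = z * eta Q t x 1"
proof -
  have ratio: "eta Q t x z' / z' = eta Q t x 1 / 1" if "z' \<noteq> 0" for z'
  proof (rule has_derivative_zero_unique_connected[of "- {0}" "\<lambda>z. eta Q t x z / z"])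
    show "open (- {0::complex})"
      by (simp add: open_Compl)
    show "connected (- {0::complex})"
      by (rule connected_punctured_universe) simp
    fix w :: complex
    assume "w \<in> - {0}"
    then have "w \<noteq> 0" by simp
    from DERIV_divide[OF kernel_alg_eta_has_field_derivative[OF Q this] DERIV_ident this]
    have "((\<lambda>z. eta Q t x z / z) has_field_derivative 0) (at w)"
      using \<open>w \<noteq> 0\<close> by simp
    moreover have "(*) 0 = (\<lambda>h::complex. 0)"
      by (simp add: fun_eq_iff)
    ultimately show "((\<lambda>z. eta Q t x z / z) has_derivative (\<lambda>h. 0)) (at w)"
      unfolding has_field_derivative_def by (simp only:)
  qed (use that in auto)
  have off_zero: "eta Q t x z' - z' * eta Q t x 1 = 0" if "z' \<noteq> 0" for z'
    using ratio[OF that] that by (simp add: field_simps)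
  have "continuous_on UNIV (\<lambda>z. eta Q t x z - z * eta Q t x 1)"
    using kernel_alg_smooth_vf[OF Q] unfolding smooth_vf_def
    by (intro continuous_intros smooth_continuous_on_third) auto
  from continuous_on_vanishing_off_point[OF this off_zero] off_zero[of z]
  show ?thesis by (cases "z = 0") auto
qed

lemma has_vector_derivative_zero_eq:
  fixes f :: "real \<Rightarrow> 'b::real_normed_vector"
  assumes "\<And>s. (f has_vector_derivative 0) (at s)"
  shows "f a = f b"
  using has_vector_derivative_zero_constant[of UNIV f] assms by (metis UNIV_I convex_UNIV)

lemma kernel_alg_eta_coefficient_derivatives:
  assumes Q: "Q \<in> kernel_alg"
  shows "px (\<lambda>t x. eta Q t x 1) t x = 0 \<and> pt (\<lambda>t x. eta Q t x 1) t x = 0"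
proof -
  have vertical: "tau Q = (\<lambda>t x z. 0)" "xi Q = (\<lambda>t x z. 0)"
    using kernel_alg_vertical[OF Q] by auto
  define c where "c = (\<lambda>t x. eta Q t x 1)"
  have c: "smooth (\<lambda>(t, x). c t x)"
    using kernel_alg_smooth_vf[OF Q] smooth_fix_third[where F = "eta Q"]
    unfolding c_def by (simp add: smooth_vf_def)
  have constant_solution: "\<i> * pt c t x + px (px c) t x = 0" for t x
  proof -
    have "pr_schr (\<lambda>s y. 0) Q (\<lambda>s y. 1) t x = 0"
      by (rule kernel_alg_annihilates[OF Q smooth_const_pair smooth_const_pair]) (simp add: schr_def)
    then show ?thesis by (simp add: pr_schr_vertical[OF vertical] c_def)
  qed
  have linear_solution:
    "\<i> * (complex_of_real x * pt c t x) + complex_of_real x * px (px c) t x + 2 * px c t x = 0" for t x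
  proof -
    have "smooth (\<lambda>(s::real, y). complex_of_real y)"
      using smooth_affine_space[of 0 1 0] by simp
    moreover have "px (\<lambda>s y. complex_of_real y) = (\<lambda>s y. 1)"
      using px_affine_space[of 0 1 0] by (simp add: fun_eq_iff)
    then have "schr (\<lambda>s y. 0) (\<lambda>s y. complex_of_real y) t x = 0"
      by (simp add: schr_def)
    ultimately have "pr_schr (\<lambda>s y. 0) Q (\<lambda>s y. complex_of_real y) t x = 0"
      by (rule kernel_alg_annihilates[OF Q smooth_const_pair])
    moreover have "(\<lambda>s y. eta Q s y (complex_of_real y)) = (\<lambda>s y. complex_of_real y * c s y)"
      unfolding c_def by (intro ext) (rule kernel_alg_eta_homogeneous[OF Q])
    ultimately show ?thesis
      by (simp add: pr_schr_vertical[OF vertical] pt_mult_left[OF c] px_px_mult_space[OF c] add.assoc)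
  qed
  have px_c: "px c t x = 0" for t x
  proof -
    have "2 * px c t x = (\<i> * (complex_of_real x * pt c t x) + complex_of_real x * px (px c) t x + 2 * px c t x)
                         - complex_of_real x * (\<i> * pt c t x + px (px c) t x)"
      by (simp add: algebra_simps)
    then show ?thesis
      using linear_solution[of x t] constant_solution[of t x] by simp
  qed
  then have "px c = (\<lambda>t x. 0)"
    by (simp add: fun_eq_iff)
  then have "pt c t x = 0"
    using constant_solution[of t x] by simp
  with px_c show ?thesis
    unfolding c_def by blast
qed

lemma kernel_alg_eta_coefficient_constant:
  assumes Q: "Q \<in> kernel_alg"
  shows "eta Q t x 1 = eta Q 0 0 1"
proof -
  have c: "smooth (\<lambda>(t, x). eta Q t x 1)"
    using kernel_alg_smooth_vf[OF Q] smooth_fix_third[where F = "eta Q"] by (simp add: smooth_vf_def)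
  note derivatives = kernel_alg_eta_coefficient_derivatives[OF Q]
  have "eta Q t x 1 = eta Q 0 x 1"
    by (rule has_vector_derivative_zero_eq) (use has_vector_derivative_pt[OF c, of x] derivatives in simp)
  also have "\<dots> = eta Q 0 0 1"
    by (rule has_vector_derivative_zero_eq[where f = "\<lambda>y. eta Q 0 y 1"])
      (use has_vector_derivative_px[OF c, of 0] derivatives in simp)
  finally show ?thesis .
qed

lemma kernel_alg_eq_vf_mult:
  assumes Q: "Q \<in> kernel_alg"
  shows "Q = vf_mult (eta Q 0 0 1)"
proof -
  define c where "c = eta Q 0 0 1"
  have "eta Q t x z = c * z" for t x z
    using kernel_alg_eta_homogeneous[OF Q, of t x z] kernel_alg_eta_coefficient_constant[OF Q, of t x]
    by (simp add: c_def mult.commute)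
  then have "Q = vf_mult c"
    using kernel_alg_vertical[OF Q] by (intro vfield.equality) (simp_all add: vf_mult_def fun_eq_iff)
  then show ?thesis by (simp only: c_def)
qed

theorem proposition1:
  shows "kernel_alg = {vf_add (vf_scale a vf_M) (vf_scale b vf_I) | a b. True}
         \<and> (\<forall>a b. vf_add (vf_scale a vf_M) (vf_scale b vf_I) = vf_add (vf_scale 0 vf_M) (vf_scale 0 vf_I)
                  \<longrightarrow> a = 0 \<and> b = 0)"
proof -
  have "Q \<in> {vf_add (vf_scale a vf_M) (vf_scale b vf_I) | a b. True}" if "Q \<in> kernel_alg" for Q
  proof -
    let ?c = "eta Q 0 0 1"
    have "complex_of_real (Re ?c) + \<i> * complex_of_real (Im ?c) = ?c"
      by (simp add: complex_eq_iff)
    then have "Q = vf_add (vf_scale (Im ?c) vf_M) (vf_scale (Re ?c) vf_I)"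
      using kernel_alg_eq_vf_mult[OF that] by (simp add: vf_add_scale_M_I)
    then show ?thesis by blast
  qed
  moreover have "{vf_add (vf_scale a vf_M) (vf_scale b vf_I) | a b. True} \<subseteq> kernel_alg"
    by (auto simp: kernel_alg_def vf_add_scale_M_I in_gV_vf_mult)
  moreover have "a = 0 \<and> b = 0"
    if "vf_add (vf_scale a vf_M) (vf_scale b vf_I) = vf_add (vf_scale 0 vf_M) (vf_scale 0 vf_I)" for a b
  proof -
    from that have "eta (vf_mult (complex_of_real b + \<i> * complex_of_real a)) 0 0 1 = eta (vf_mult 0) 0 0 1"
      by (simp add: vf_add_scale_M_I)
    then show ?thesis by (simp add: vf_mult_def complex_eq_iff)
  qed
  ultimately show ?thesis by blast
qed

end
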